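(* Let $\theta>0$ and consider the Softplus network $a^{(0)}=x$, $z^{(l)}=b^{(l)}+W^{(l)}a^{(l-1)}$, $a^{(l)}=\sigma_\theta(z^{(l)})$ with $\sigma_\theta(z)=\theta\log(1+e^{z/\theta})$. Assume $\gamma^{(l)}_i>0$ for all $l,i$. Fix $m\ge1$, a neuron $j$ of layer $m$, a label $q$, and $u=s^{(m)}_{j,q}$. Then for every $0\le l\le m$ and neuron $i$ of layer $l$, $\partial a^{(m)}_j/\partial a^{(l)}_i=\xi_{q,+}\bigl(\Gamma^\theta_u(s^{(l)}_{i,+})-\Gamma^\theta_u(s^{(l)}_{i,-})\bigr)$, where $\partial a^{(m)}_j/\partial a^{(l)}_i=[D^{(m)}W^{(m)}\cdots D^{(l+1)}W^{(l+1)}]_{ji}$ with $D^{(l')}=\mathrm{diag}(\sigma'_\theta(z^{(l')}))$.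
   Context: $\sigma'_\theta(z)=1/(1+e^{-z/\theta})$. $W^{(l,\pm)}=(W^{(l)})^\pm$ entrywise ($u^\pm=\max(\pm u,0)$). Labels $r,r',q\in\{+,-\}$; $r\oplus r'=+$ if $r=r'$, else $-$; $\xi_{q,+}=1$ if $q=+$, $-1$ if $q=-$. Soft Stopping-Game chain: states $s^{(l)}_{i,r}$ ($0\le l\le L$) plus a cemetery $\perp$. From $s^{(l)}_{i,r}$ with $l\ge1$: with probability $1-\sigma'_\theta(z^{(l)}_i)$ go to $\perp$; with probability $\sigma'_\theta(z^{(l)}_i)\,W^{(l,r\oplus r')}_{ih}/\gamma^{(l)}_i$ go to $s^{(l-1)}_{h,r'}$, where $\gamma^{(l)}_i=\sum_h|W^{(l)}_{ih}|$, and such a continuation carries discount factor $\gamma^{(l)}_i$. Layer-0 states and $\perp$ are terminal. For a trajectory $\tau$ from $\tau_0=u$, $d_0=1$ and $d_t$ is the product of the discount factors of the continuations taken before time $t$. $\Gamma^\theta_u(v)=\mathbb{E}[\sum_t d_t\mathbf 1\{\tau_t=v\}]$. *)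

theory Defs
  imports Complex_Main
begin

definition softplus :: "real \<Rightarrow> real \<Rightarrow> real" where
  "softplus \<theta> t = \<theta> * ln (1 + exp (t / \<theta>))"

definition dsoftplus :: "real \<Rightarrow> real \<Rightarrow> real" where
  "dsoftplus \<theta> t = 1 / (1 + exp (- t / \<theta>))"

(* Network: widths n l, weights W l i h (= W^(l)_{ih}, i < n l, h < n (l-1)),
   biases b l i, input x.  act l = a^(l). *)
primrec act :: "real \<Rightarrow> (nat \<Rightarrow> nat \<Rightarrow> nat \<Rightarrow> real) \<Rightarrow> (nat \<Rightarrow> nat \<Rightarrow> real)
    \<Rightarrow> (nat \<Rightarrow> real) \<Rightarrow> (nat \<Rightarrow> nat) \<Rightarrow> nat \<Rightarrow> nat \<Rightarrow> real" where
  "act \<theta> W b x n 0 i = x i"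
| "act \<theta> W b x n (Suc l) i =
     softplus \<theta> (b (Suc l) i + (\<Sum>h<n l. W (Suc l) i h * act \<theta> W b x n l h))"

(* pre-activation z^(l)_i for l \<ge> 1 (z^(0) is not used) *)
definition preact :: "real \<Rightarrow> (nat \<Rightarrow> nat \<Rightarrow> nat \<Rightarrow> real) \<Rightarrow> (nat \<Rightarrow> nat \<Rightarrow> real)
    \<Rightarrow> (nat \<Rightarrow> real) \<Rightarrow> (nat \<Rightarrow> nat) \<Rightarrow> nat \<Rightarrow> nat \<Rightarrow> real" where
  "preact \<theta> W b x n l i =
     (if l = 0 then 0 else b l i + (\<Sum>h<n (l - 1). W l i h * act \<theta> W b x n (l - 1) h))"

(* [D^(m) W^(m) ... D^(l+1) W^(l+1)]_{ji}; identity when m = l *)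
primrec jac :: "real \<Rightarrow> (nat \<Rightarrow> nat \<Rightarrow> nat \<Rightarrow> real) \<Rightarrow> (nat \<Rightarrow> nat \<Rightarrow> real)
    \<Rightarrow> (nat \<Rightarrow> real) \<Rightarrow> (nat \<Rightarrow> nat) \<Rightarrow> nat \<Rightarrow> nat \<Rightarrow> nat \<Rightarrow> nat \<Rightarrow> real" where
  "jac \<theta> W b x n l 0 j i = (if j = i then 1 else 0)"
| "jac \<theta> W b x n l (Suc k) j i =
     (if Suc k \<le> l then (if j = i then 1 else 0)
      else dsoftplus \<theta> (preact \<theta> W b x n (Suc k) j) *
           (\<Sum>h<n k. W (Suc k) j h * jac \<theta> W b x n l k h i))"

definition gam :: "(nat \<Rightarrow> nat \<Rightarrow> nat \<Rightarrow> real) \<Rightarrow> (nat \<Rightarrow> nat) \<Rightarrow> nat \<Rightarrow> nat \<Rightarrow> real" where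
  "gam W n l i = (\<Sum>h<n (l - 1). \<bar>W l i h\<bar>)"

(* States of the Soft Stopping-Game chain: S l i r = s^(l)_{i,r} (r = True means +),
   Bot = cemetery *)
datatype st = S nat nat bool | Bot

definition states :: "(nat \<Rightarrow> nat) \<Rightarrow> nat \<Rightarrow> st set" where
  "states n L = {S l i r | l i r. l \<le> L \<and> i < n l} \<union> {Bot}"

definition sgnpart :: "bool \<Rightarrow> real \<Rightarrow> real" where
  "sgnpart r t = (if r then max t 0 else max (- t) 0)"

fun trans :: "real \<Rightarrow> (nat \<Rightarrow> nat \<Rightarrow> nat \<Rightarrow> real) \<Rightarrow> (nat \<Rightarrow> nat \<Rightarrow> real)
    \<Rightarrow> (nat \<Rightarrow> real) \<Rightarrow> (nat \<Rightarrow> nat) \<Rightarrow> st \<Rightarrow> st \<Rightarrow> real" where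
  "trans \<theta> W b x n (S l i r) Bot =
     (if 1 \<le> l then 1 - dsoftplus \<theta> (preact \<theta> W b x n l i) else 0)"
| "trans \<theta> W b x n (S l i r) (S l' h r') =
     (if 1 \<le> l \<and> l' = l - 1
      then dsoftplus \<theta> (preact \<theta> W b x n l i) * sgnpart (r = r') (W l i h) / gam W n l i
      else 0)"
| "trans \<theta> W b x n Bot s = 0"

fun disc :: "(nat \<Rightarrow> nat \<Rightarrow> nat \<Rightarrow> real) \<Rightarrow> (nat \<Rightarrow> nat) \<Rightarrow> st \<Rightarrow> st \<Rightarrow> real" where
  "disc W n (S l i r) (S l' h r') = gam W n l i"
| "disc W n s s' = 1"

(* Gamma^theta_u(v) = E[ sum_t d_t 1{tau_t = v} ]
   = sum_t sum over state paths p = (tau_0,...,tau_t) with tau_0 = u, tau_t = v of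
     P(path) * d_t *)
definition Gam :: "real \<Rightarrow> (nat \<Rightarrow> nat \<Rightarrow> nat \<Rightarrow> real) \<Rightarrow> (nat \<Rightarrow> nat \<Rightarrow> real)
    \<Rightarrow> (nat \<Rightarrow> real) \<Rightarrow> (nat \<Rightarrow> nat) \<Rightarrow> nat \<Rightarrow> st \<Rightarrow> st \<Rightarrow> real" where
  "Gam \<theta> W b x n L u v =
     (\<Sum>t. \<Sum>p\<in>{p. length p = Suc t \<and> set p \<subseteq> states n L \<and> p ! 0 = u \<and> p ! t = v}.
        (\<Prod>k<t. trans \<theta> W b x n (p ! k) (p ! Suc k)) *
        (\<Prod>k<t. disc W n (p ! k) (p ! Suc k)))"

end

theory Submission
  imports Defs
begin

(* Gamma_u(v) is a series over walk lengths t of discounted path weights.  Every continuation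
   lowers the layer by one, so from s^(m)_{j,q} only walks of length m - l reach layer l and the
   series reduces to a single finite walk sum G.  Splitting off the first step, whose discount
   gamma^(k+1)_j cancels the normalisation of the transition probability, gives
     G_{d+1}(s^(k+1)_{j,q}, v) = sigma'(z^(k+1)_j) * sum_h sum_r W^(k+1, q (+) r)_{jh} G_d(s^(k)_{h,r}, v).
   Hence xi_q (G(., s_{i,+}) - G(., s_{i,-})) satisfies the recursion of the Jacobian product
   D^(k+1) W^(k+1) ..., because u^+ - u^- = u. *)

definition walks :: "'a set \<Rightarrow> nat \<Rightarrow> 'a \<Rightarrow> 'a \<Rightarrow> 'a list set" where
  "walks A t u v = {p. length p = Suc t \<and> set p \<subseteq> A \<and> p ! 0 = u \<and> p ! t = v}"

definition walk_sum :: "'a set \<Rightarrow> ('a \<Rightarrow> 'a \<Rightarrow> 'b::comm_semiring_1) \<Rightarrow> nat \<Rightarrow> 'a \<Rightarrow> 'a \<Rightarrow> 'b"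
  where "walk_sum A w t u v = (\<Sum>p\<in>walks A t u v. \<Prod>k<t. w (p ! k) (p ! Suc k))"

lemma finite_walks: "finite A \<Longrightarrow> finite (walks A t u v)"
  by (rule finite_subset[OF _ finite_lists_length_eq[of A "Suc t"]]) (auto simp: walks_def)

lemma walk_sum_0: "walk_sum A w 0 u v = (if u = v \<and> u \<in> A then 1 else 0)"
proof -
  have "walks A 0 u v = (if u = v \<and> u \<in> A then {[u]} else {})"
    by (auto simp: walks_def length_Suc_conv)
  then show ?thesis by (auto simp: walk_sum_def)
qed

lemma walk_sum_outside:
  assumes "u \<notin> A"
  shows "walk_sum A w t u v = 0"
proof -
  have "u \<in> A" if "p \<in> walks A t u v" for p
    using that nth_mem[of 0 p] by (auto simp: walks_def)
  then have "walks A t u v = {}"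
    using assms by blast
  then show ?thesis by (simp add: walk_sum_def)
qed

lemma walks_Suc:
  assumes "u \<in> A"
  shows "walks A (Suc t) u v = (\<lambda>(y, p). u # p) ` (SIGMA y:A. walks A t y v)"
proof (intro equalityI subsetI)
  fix p assume p: "p \<in> walks A (Suc t) u v"
  then obtain p' where p': "p = u # p'" and "length p' = Suc t"
    by (cases p) (auto simp: walks_def)
  then have "p' ! 0 \<in> A" "p' \<in> walks A t (p' ! 0) v"
    using p p' nth_mem[of 0 p'] by (auto simp: walks_def)
  then show "p \<in> (\<lambda>(y, p). u # p) ` (SIGMA y:A. walks A t y v)"
    using p' by force
qed (use assms in \<open>auto simp: walks_def\<close>)

lemma walk_sum_Suc:
  assumes "finite A" and "u \<in> A"
  shows "walk_sum A w (Suc t) u v = (\<Sum>y\<in>A. w u y * walk_sum A w t y v)"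
proof -
  have inj: "inj_on (\<lambda>(y, p). u # p) (SIGMA y:A. walks A t y v)"
    by (auto simp: inj_on_def walks_def)
  have "walk_sum A w (Suc t) u v =
      (\<Sum>(y, p)\<in>(SIGMA y:A. walks A t y v). \<Prod>k<Suc t. w ((u # p) ! k) ((u # p) ! Suc k))"
    unfolding walk_sum_def walks_Suc[OF assms(2)]
    by (subst sum.reindex[OF inj]) (simp add: case_prod_unfold)
  also have "\<dots> = (\<Sum>(y, p)\<in>(SIGMA y:A. walks A t y v). w u y * (\<Prod>k<t. w (p ! k) (p ! Suc k)))"
    by (intro sum.cong refl)
      (auto simp: prod.lessThan_Suc_shift walks_def simp del: prod.lessThan_Suc)
  also have "\<dots> = (\<Sum>y\<in>A. w u y * walk_sum A w t y v)"
    by (simp add: sum.Sigma[symmetric] finite_walks assms(1) walk_sum_def sum_distrib_left)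
  finally show ?thesis .
qed

lemma walk_sum_nonzero_graded:
  assumes "finite A"
    and graded: "\<And>u y. w u y \<noteq> 0 \<Longrightarrow> y \<in> B \<Longrightarrow> u \<in> B \<and> lvl u = Suc (lvl y)"
  shows "walk_sum A w t u v \<noteq> 0 \<Longrightarrow> v \<in> B \<Longrightarrow> u \<in> B \<and> lvl u = lvl v + t"
proof (induction t arbitrary: u)
  case 0
  then have "u = v"
    by (cases "u = v \<and> u \<in> A") (simp_all add: walk_sum_0)
  with 0 show ?case
    by simp
next
  case (Suc t)
  have "u \<in> A"
    using Suc.prems(1) by (rule contrapos_np) (simp add: walk_sum_outside)
  with Suc.prems(1) have "(\<Sum>y\<in>A. w u y * walk_sum A w t y v) \<noteq> 0"
    by (simp add: walk_sum_Suc[OF assms(1)])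
  then obtain y where "w u y \<noteq> 0" and "walk_sum A w t y v \<noteq> 0"
    by (metis (mono_tags, lifting) mult_zero_left mult_zero_right sum.neutral)
  with Suc.IH[of y] Suc.prems(2) graded[of u y] show ?case
    by simp
qed

fun layer :: "st \<Rightarrow> nat" where
  "layer (S l i r) = l"
| "layer Bot = 0"

lemma finite_states: "finite (states n L)"
proof -
  have "states n L \<subseteq> insert Bot (\<Union>l\<le>L. \<Union>i<n l. {S l i True, S l i False})"
    by (auto simp: states_def)
  then show ?thesis by (rule finite_subset) auto
qed

lemma sgnpart_diff: "sgnpart True t - sgnpart False t = t"
  by (simp add: sgnpart_def max_def)

lemma jac_refl: "jac \<theta> W b x n l l j i = (if j = i then 1 else 0)"
  by (cases l) simp_all

context
  fixes \<theta> :: real and W :: "nat \<Rightarrow> nat \<Rightarrow> nat \<Rightarrow> real" and b :: "nat \<Rightarrow> nat \<Rightarrow> real"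
    and x :: "nat \<Rightarrow> real" and n :: "nat \<Rightarrow> nat" and L :: nat
begin

definition discounted_trans :: "st \<Rightarrow> st \<Rightarrow> real" where
  "discounted_trans s s' = trans \<theta> W b x n s s' * disc W n s s'"

abbreviation chain_walk_sum :: "nat \<Rightarrow> st \<Rightarrow> st \<Rightarrow> real" where
  "chain_walk_sum \<equiv> walk_sum (states n L) discounted_trans"

lemma Gam_eq_suminf_walk_sum: "Gam \<theta> W b x n L u v = (\<Sum>t. chain_walk_sum t u v)"
  by (simp add: Gam_def walk_sum_def walks_def discounted_trans_def prod.distrib)

lemma discounted_trans_nonzero_layer:
  "discounted_trans s s' \<noteq> 0 \<Longrightarrow> s' \<noteq> Bot \<Longrightarrow> s \<noteq> Bot \<and> layer s = Suc (layer s')"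
  by (cases s; cases s') (auto simp: discounted_trans_def split: if_splits)

lemma chain_walk_sum_nonzero_layer:
  assumes "chain_walk_sum t s (S l i r) \<noteq> 0"
  shows "\<exists>j q. s = S (l + t) j q"
proof -
  have "s \<noteq> Bot \<and> layer s = l + t"
    using walk_sum_nonzero_graded[OF finite_states, of discounted_trans "- {Bot}" layer]
      discounted_trans_nonzero_layer assms by force
  then show ?thesis by (cases s) auto
qed

lemma Gam_eq_walk_sum:
  assumes "l \<le> m"
  shows "Gam \<theta> W b x n L (S m j q) (S l i r) = chain_walk_sum (m - l) (S m j q) (S l i r)"
proof -
  have "chain_walk_sum t (S m j q) (S l i r) = 0" if "t \<noteq> m - l" for t
    using chain_walk_sum_nonzero_layer that by fastforce
  then show ?thesis
    unfolding Gam_eq_suminf_walk_sum by (subst suminf_finite[of "{m - l}"]) auto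
qed

lemma discounted_trans_continuation:
  assumes "gam W n (Suc k) j > 0"
  shows "discounted_trans (S (Suc k) j q) (S k h r) =
           dsoftplus \<theta> (preact \<theta> W b x n (Suc k) j) * sgnpart (q = r) (W (Suc k) j h)"
  using assms by (simp add: discounted_trans_def)

lemma chain_walk_sum_first_step:
  assumes "Suc k \<le> L" and "j < n (Suc k)" and "gam W n (Suc k) j > 0" and "k = l + d"
  shows "chain_walk_sum (Suc d) (S (Suc k) j q) (S l i r) =
           dsoftplus \<theta> (preact \<theta> W b x n (Suc k) j) *
           (\<Sum>h<n k. \<Sum>r'\<in>UNIV. sgnpart (q = r') (W (Suc k) j h) * chain_walk_sum d (S k h r') (S l i r))"
proof -
  define layer_k where "layer_k = (\<lambda>(h, r'). S k h r') ` ({..<n k} \<times> UNIV)"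
  have "layer_k \<subseteq> states n L"
    using assms(1) by (auto simp: layer_k_def states_def)
  moreover have "discounted_trans (S (Suc k) j q) s * chain_walk_sum d s (S l i r) = 0"
    if "s \<in> states n L - layer_k" for s
    using that chain_walk_sum_nonzero_layer[of d s l i r] assms(4)
    by (auto simp: layer_k_def states_def)
  moreover have "S (Suc k) j q \<in> states n L"
    using assms(1,2) by (auto simp: states_def)
  ultimately have "chain_walk_sum (Suc d) (S (Suc k) j q) (S l i r) =
      (\<Sum>s\<in>layer_k. discounted_trans (S (Suc k) j q) s * chain_walk_sum d s (S l i r))"
    by (simp add: walk_sum_Suc finite_states sum.mono_neutral_right)
  also have "\<dots> = (\<Sum>h<n k. \<Sum>r'\<in>UNIV.
      discounted_trans (S (Suc k) j q) (S k h r') * chain_walk_sum d (S k h r') (S l i r))"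
    unfolding layer_k_def
    by (subst sum.reindex) (auto simp: inj_on_def sum.cartesian_product case_prod_unfold)
  finally show ?thesis
    using assms(3) by (simp add: discounted_trans_continuation sum_distrib_left mult.assoc)
qed

lemma jac_eq_signed_walk_sum:
  assumes gam_pos: "\<And>l' i'. 1 \<le> l' \<Longrightarrow> l' \<le> L \<Longrightarrow> i' < n l' \<Longrightarrow> gam W n l' i' > 0"
    and i: "i < n l"
  shows "l + d \<le> L \<Longrightarrow> j < n (l + d) \<Longrightarrow>
    jac \<theta> W b x n l (l + d) j i =
      (if q then 1 else -1) *
      (chain_walk_sum d (S (l + d) j q) (S l i True) - chain_walk_sum d (S (l + d) j q) (S l i False))"
proof (induction d arbitrary: j q)
  case 0
  then have "S l j q \<in> states n L" "S l i r \<in> states n L" for r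
    using i by (auto simp: states_def)
  then show ?case by (cases q) (auto simp: walk_sum_0 jac_refl)
next
  case (Suc d)
  define k where "k = l + d"
  define D where "D = dsoftplus \<theta> (preact \<theta> W b x n (Suc k) j)"
  let ?\<xi> = "\<lambda>r. if r then 1 else -1 :: real"
  let ?G = "\<lambda>s. chain_walk_sum d s (S l i True) - chain_walk_sum d s (S l i False)"
  have k: "l + Suc d = Suc k"
    by (simp add: k_def)
  have IH: "?G (S k h r) = ?\<xi> r * jac \<theta> W b x n l k h i" if "h < n k" for h r
    using Suc.IH[of h r] Suc.prems that by (cases r) (auto simp: k_def)
  have step: "chain_walk_sum (Suc d) (S (Suc k) j q) (S l i r) =
      D * (\<Sum>h<n k. \<Sum>r'\<in>UNIV. sgnpart (q = r') (W (Suc k) j h) * chain_walk_sum d (S k h r') (S l i r))"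
    for r
    unfolding D_def
    using Suc.prems gam_pos[of "Suc k" j] k by (intro chain_walk_sum_first_step) (auto simp: k_def)
  have "?\<xi> q * (chain_walk_sum (Suc d) (S (Suc k) j q) (S l i True)
      - chain_walk_sum (Suc d) (S (Suc k) j q) (S l i False))
      = D * (\<Sum>h<n k. \<Sum>r'\<in>UNIV. ?\<xi> q * sgnpart (q = r') (W (Suc k) j h) * ?G (S k h r'))"
    by (simp add: step sum_subtractf[symmetric] sum_distrib_left algebra_simps)
  also have "\<dots> = D * (\<Sum>h<n k. (sgnpart True (W (Suc k) j h) - sgnpart False (W (Suc k) j h))
      * jac \<theta> W b x n l k h i)"
    by (intro arg_cong[where f = "(*) D"] sum.cong refl)
      (cases q; simp add: IH UNIV_bool algebra_simps)
  also have "\<dots> = jac \<theta> W b x n l (Suc k) j i"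
    by (simp add: sgnpart_diff D_def k_def sum_distrib_left)
  finally show ?case
    unfolding k by (rule sym)
qed

end

theorem mainTheorem7:
  fixes \<theta> :: real and W :: "nat \<Rightarrow> nat \<Rightarrow> nat \<Rightarrow> real" and b :: "nat \<Rightarrow> nat \<Rightarrow> real"
    and x :: "nat \<Rightarrow> real" and n :: "nat \<Rightarrow> nat" and L m j l i :: nat and q :: bool
  assumes "\<theta> > 0"
    and "\<And>l' i'. 1 \<le> l' \<Longrightarrow> l' \<le> L \<Longrightarrow> i' < n l' \<Longrightarrow> gam W n l' i' > 0"
    and "1 \<le> m" and "m \<le> L" and "j < n m"
    and "l \<le> m" and "i < n l"
  shows "jac \<theta> W b x n l m j i =
           (if q then 1 else -1) *
           (Gam \<theta> W b x n L (S m j q) (S l i True) - Gam \<theta> W b x n L (S m j q) (S l i False))"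
proof -
  have "l + (m - l) = m"
    using assms(6) by simp
  then show ?thesis
    using jac_eq_signed_walk_sum[OF assms(2,7), where d = "m - l" and j = j and q = q] assms(4,5)
    by (simp add: Gam_eq_walk_sum[OF assms(6)])
qed

end
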